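(* Let $N\in\{1,2\}$, let $\lambda_1,\dots,\lambda_N$ be distinct real numbers and $\mu_1,\dots,\mu_N$ nonzero real constants, and let $\bar F_j$ ($1\le j\le N$) and $F_m$ ($1\le m\le 2N$) be the functions on $\mathbb{R}^{6N}$ defined below. Consider the $3N\times3N$ matrix \[D(N)=\begin{pmatrix}(\mathrm{grad}_{P_1}\bar F_1)^T&(\mathrm{grad}_{P_2}\bar F_1)^T&(\mathrm{grad}_{P_3}\bar F_1)^T\\ \vdots&\vdots&\vdots\\ (\mathrm{grad}_{P_1}\bar F_N)^T&(\mathrm{grad}_{P_2}\bar F_N)^T&(\mathrm{grad}_{P_3}\bar F_N)^T\\ (\mathrm{grad}_{P_1}F_1)^T&(\mathrm{grad}_{P_2}F_1)^T&(\mathrm{grad}_{P_3}F_1)^T\\ \vdots&\vdots&\vdots\\ (\mathrm{grad}_{P_1}F_{2N})^T&(\mathrm{grad}_{P_2}F_{2N})^T&(\mathrm{grad}_{P_3}F_{2N})^T\end{pmatrix},\] where $\mathrm{grad}_{P_i}G=(\frac{\partial G}{\partial\phi_{i1}},\dots,\frac{\partial G}{\partial\phi_{iN}})^T$. Then $\det D(N)$ is not identically zero on $\mathbb{R}^{6N}$; consequently the integrals of motion $\bar F_j$, $1\le j\le N$, and $F_m$, $1\le m\le 2N$, are independent at least on some region of $\mathbb{R}^{6N}$.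
   Context: Coordinates on $\mathbb{R}^{6N}$: $\phi_{ij},\psi_{ij}$ ($i=1,2,3$, $j=1,\dots,N$); $P_i=(\phi_{i1},\dots,\phi_{iN})^T$, $Q_i=(\psi_{i1},\dots,\psi_{iN})^T$; $A=\mathrm{diag}(\lambda_1,\dots,\lambda_N)$, $B=\mathrm{diag}(\mu_1,\dots,\mu_N)$; $\langle\cdot,\cdot\rangle$ the standard inner product on $\mathbb{R}^N$. $\bar F_j=\sum_{i=1}^3\phi_{ij}\psi_{ij}$. $F_1=-8(\langle P_1,BQ_1\rangle-\langle P_3,BQ_3\rangle)$ and for $m\ge2$: $F_m=4\sum_{i=1}^{m-1}\big[(\langle A^{i-1}P_1,BQ_1\rangle-\langle A^{i-1}P_3,BQ_3\rangle)(\langle A^{m-i-1}P_1,BQ_1\rangle-\langle A^{m-i-1}P_3,BQ_3\rangle)+2(\langle A^{i-1}P_1,BQ_2\rangle+\langle A^{i-1}P_2,BQ_3\rangle)(\langle A^{m-i-1}P_2,BQ_1\rangle+\langle A^{m-i-1}P_3,BQ_2\rangle)\big]-8(\langle A^{m-1}P_1,BQ_1\rangle-\langle A^{m-1}P_3,BQ_3\rangle)$. *)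

theory Defs
  imports Complex_Main "HOL-Analysis.Derivative" "Jordan_Normal_Form.Determinant"
begin

text \<open>Coordinates on R^(6N): phi i j and psi i j, with i in {1,2,3}, j in {1..N}
  (1-based; values at other indices are irrelevant).
  lam j and mu j (j in {1..N}) are the diagonal entries of A and B.\<close>

text \<open>The pairing < A^k P_a , B Q_b > = sum_{j=1..N} (lam_j^k phi_{aj}) (mu_j psi_{bj}).\<close>
definition pairAB :: "nat \<Rightarrow> (nat \<Rightarrow> real) \<Rightarrow> (nat \<Rightarrow> real) \<Rightarrow> nat \<Rightarrow> nat \<Rightarrow> nat
    \<Rightarrow> (nat \<Rightarrow> nat \<Rightarrow> real) \<Rightarrow> (nat \<Rightarrow> nat \<Rightarrow> real) \<Rightarrow> real" where
  "pairAB N lam mu k a b phi psi = (\<Sum>j=1..N. (lam j ^ k * phi a j) * (mu j * psi b j))"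

definition Fbar :: "nat \<Rightarrow> (nat \<Rightarrow> nat \<Rightarrow> real) \<Rightarrow> (nat \<Rightarrow> nat \<Rightarrow> real) \<Rightarrow> real" where
  "Fbar j phi psi = (\<Sum>i=1..3. phi i j * psi i j)"

definition Fm :: "nat \<Rightarrow> (nat \<Rightarrow> real) \<Rightarrow> (nat \<Rightarrow> real) \<Rightarrow> nat
    \<Rightarrow> (nat \<Rightarrow> nat \<Rightarrow> real) \<Rightarrow> (nat \<Rightarrow> nat \<Rightarrow> real) \<Rightarrow> real" where
  "Fm N lam mu m phi psi =
    (let p = (\<lambda>k a b. pairAB N lam mu k a b phi psi) in
     if m = 1 then -8 * (p 0 1 1 - p 0 3 3)
     else 4 * (\<Sum>i=1..m-1.
              (p (i-1) 1 1 - p (i-1) 3 3) * (p (m-i-1) 1 1 - p (m-i-1) 3 3)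
            + 2 * (p (i-1) 1 2 + p (i-1) 2 3) * (p (m-i-1) 2 1 + p (m-i-1) 3 2))
          - 8 * (p (m-1) 1 1 - p (m-1) 3 3))"

definition dphi :: "((nat \<Rightarrow> nat \<Rightarrow> real) \<Rightarrow> (nat \<Rightarrow> nat \<Rightarrow> real) \<Rightarrow> real)
    \<Rightarrow> nat \<Rightarrow> nat \<Rightarrow> (nat \<Rightarrow> nat \<Rightarrow> real) \<Rightarrow> (nat \<Rightarrow> nat \<Rightarrow> real) \<Rightarrow> real" where
  "dphi G i j phi psi = deriv (\<lambda>t. G (phi(i := (phi i)(j := t))) psi) (phi i j)"

text \<open>The 3N x 3N matrix D(N) (0-based row r, column c).  Rows 0..N-1: Fbar_1..Fbar_N;
  rows N..3N-1: F_1..F_{2N}.  Column c = (i-1)*N + (j-1) holds d/d phi_{ij}.\<close>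
definition DN :: "nat \<Rightarrow> (nat \<Rightarrow> real) \<Rightarrow> (nat \<Rightarrow> real)
    \<Rightarrow> (nat \<Rightarrow> nat \<Rightarrow> real) \<Rightarrow> (nat \<Rightarrow> nat \<Rightarrow> real) \<Rightarrow> real mat" where
  "DN N lam mu phi psi = mat (3*N) (3*N) (\<lambda>(r, c).
     let G = (if r < N then Fbar (r+1) else Fm N lam mu (r-N+1))
     in dphi G (c div N + 1) (c mod N + 1) phi psi)"

end

theory Submission
  imports Defs
begin

text \<open>
  At the point \<open>P\<^sub>1 = P\<^sub>3 = 0\<close>, \<open>P\<^sub>2 = e\<^sub>1 - e\<^sub>2\<close>,
  \<open>Q\<^sub>1 = Q\<^sub>3 = B\<^sup>-\<^sup>1 (1,\<dots>,1)\<close>, \<open>Q\<^sub>2 = 0\<close>, the only nonzero pairings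
  \<open>\<langle>A\<^sup>k P\<^sub>a, B Q\<^sub>b\<rangle>\<close> are those with \<open>a = 2\<close>, \<open>b \<noteq> 2\<close>, all equal to
  \<open>s\<^sub>k = \<lambda>\<^sub>1\<^sup>k - \<lambda>\<^sub>2\<^sup>k\<close> (or \<open>\<lambda>\<^sub>1\<^sup>k\<close> if \<open>N = 1\<close>).
  So in the gradient of the quadratic part of \<open>F\<^sub>m\<close> only the terms differentiating
  \<open>\<langle>A\<^sup>k P\<^sub>1, B Q\<^sub>2\<rangle> + \<langle>A\<^sup>k P\<^sub>2, B Q\<^sub>3\<rangle>\<close> and \<open>\<langle>A\<^sup>k P\<^sub>2, B Q\<^sub>1\<rangle> + \<langle>A\<^sup>k P\<^sub>3, B Q\<^sub>2\<rangle>\<close>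
  survive, and \<open>D(N)\<close> is sparse enough to compute its kernel by hand: the rows of
  \<open>Fbar\<^sub>j\<close> and \<open>F\<^sub>1, F\<^sub>2\<close> kill the \<open>P\<^sub>1\<close>- and \<open>P\<^sub>3\<close>-components, and the
  \<open>P\<^sub>2\<close>-components are then killed by \<open>F\<^sub>2\<close> if \<open>N = 1\<close> (as \<open>s\<^sub>0 = 1\<close>) and by
  \<open>F\<^sub>3, F\<^sub>4\<close>, with factors \<open>\<lambda>\<^sub>1 - \<lambda>\<^sub>2\<close> and \<open>(\<lambda>\<^sub>1 - \<lambda>\<^sub>2)\<^sup>2\<close>, if \<open>N = 2\<close>.
\<close>

lemma Fm_eq_sum:
  "Fm N lam mu m phi psi =
    (let p = (\<lambda>k a b. pairAB N lam mu k a b phi psi) in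
     4 * (\<Sum>l=1..<m.
            (p (l-1) 1 1 - p (l-1) 3 3) * (p (m-l-1) 1 1 - p (m-l-1) 3 3)
          + 2 * (p (l-1) 1 2 + p (l-1) 2 3) * (p (m-l-1) 2 1 + p (m-l-1) 3 2))
       - 8 * (p (m-1) 1 1 - p (m-1) 3 3))"
proof -
  have "{1..m-1} = {1..<m}" by auto
  then show ?thesis unfolding Fm_def Let_def by (cases "m = 1") simp_all
qed

lemma dphi_eqI:
  assumes "((\<lambda>t. G (phi(i := (phi i)(j := t))) psi) has_field_derivative D) (at (phi i j))"
  shows "dphi G i j phi psi = D"
  using DERIV_imp_deriv[OF assms] by (simp add: dphi_def)

lemma pairAB_has_field_derivative:
  "((\<lambda>t. pairAB N lam mu k a b (phi(i := (phi i)(j := t))) psi) has_field_derivative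
     (if a = i \<and> j \<in> {1..N} then lam j ^ k * mu j * psi b j else 0)) (at t0)"
proof -
  have "((\<lambda>t. \<Sum>j'=1..N. lam j' ^ k * (phi(i := (phi i)(j := t))) a j' * (mu j' * psi b j'))
     has_field_derivative
       (\<Sum>j'=1..N. if a = i \<and> j' = j then lam j' ^ k * mu j' * psi b j' else 0)) (at t0)"
    by (rule DERIV_sum, cases "a = i") (auto intro!: derivative_eq_intros)
  moreover have "(\<Sum>j'=1..N. if a = i \<and> j' = j then lam j' ^ k * mu j' * psi b j' else 0)
     = (if a = i \<and> j \<in> {1..N} then lam j ^ k * mu j * psi b j else 0)"
    by (cases "a = i") (auto simp: sum.delta)
  ultimately show ?thesis unfolding pairAB_def by (simp add: mult.assoc)
qed

lemma dphi_pairAB: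
  "dphi (pairAB N lam mu k a b) i j phi psi =
     (if a = i \<and> j \<in> {1..N} then lam j ^ k * mu j * psi b j else 0)"
  by (rule dphi_eqI pairAB_has_field_derivative)+

lemma dphi_Fbar:
  "dphi (Fbar k) i j phi psi = (if i \<in> {1..3} \<and> j = k then psi i j else 0)"
proof -
  have "((\<lambda>t. \<Sum>i'=1..3. (phi(i := (phi i)(j := t))) i' k * psi i' k) has_field_derivative
     (\<Sum>i'=1..3. if i' = i \<and> j = k then psi i' k else 0)) (at (phi i j))"
    apply (rule DERIV_sum)
    subgoal for n by (cases "n = i"; cases "j = k") (auto intro!: derivative_eq_intros)
    done
  moreover have "(\<Sum>i'=1..3. if i' = i \<and> j = k then psi i' k else 0)
     = (if i \<in> {1..3} \<and> j = k then psi i j else 0)"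
    by (cases "j = k") (auto simp: sum.delta)
  ultimately show ?thesis unfolding Fbar_def by (intro dphi_eqI) simp
qed

lemma dphi_Fm:
  "dphi (Fm N lam mu m) i j phi psi =
    (let p = (\<lambda>k a b. pairAB N lam mu k a b phi psi);
         q = (\<lambda>k a b. dphi (pairAB N lam mu k a b) i j phi psi) in
     4 * (\<Sum>l=1..<m.
            (q (l-1) 1 1 - q (l-1) 3 3) * (p (m-l-1) 1 1 - p (m-l-1) 3 3)
          + (p (l-1) 1 1 - p (l-1) 3 3) * (q (m-l-1) 1 1 - q (m-l-1) 3 3)
          + 2 * (q (l-1) 1 2 + q (l-1) 2 3) * (p (m-l-1) 2 1 + p (m-l-1) 3 2)
          + 2 * (p (l-1) 1 2 + p (l-1) 2 3) * (q (m-l-1) 2 1 + q (m-l-1) 3 2))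
       - 8 * (q (m-1) 1 1 - q (m-1) 3 3))"
proof -
  have "((\<lambda>t. pairAB N lam mu k a b (phi(i := (phi i)(j := t))) psi) has_field_derivative
      dphi (pairAB N lam mu k a b) i j phi psi) (at (phi i j))" for k a b
    unfolding dphi_pairAB by (rule pairAB_has_field_derivative)
  then show ?thesis
    unfolding Fm_eq_sum Let_def
    by (intro dphi_eqI) (auto intro!: derivative_eq_intros DERIV_sum simp: algebra_simps)
qed

definition phi_witness :: "nat \<Rightarrow> nat \<Rightarrow> real" where
  "phi_witness i j = (if i = 2 \<and> j = 1 then 1 else if i = 2 \<and> j = 2 then -1 else 0)"

definition psi_witness :: "(nat \<Rightarrow> real) \<Rightarrow> nat \<Rightarrow> nat \<Rightarrow> real" where
  "psi_witness mu i j = (if i = 2 then 0 else 1 / mu j)"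

lemma pairAB_witness:
  assumes "N \<ge> 1" and "\<forall>j\<in>{1..N}. mu j \<noteq> 0"
  shows "pairAB N lam mu k a b phi_witness (psi_witness mu) =
    (if a = 2 \<and> b \<noteq> 2 then lam 1 ^ k - (if N \<ge> 2 then lam 2 ^ k else 0) else 0)"
proof -
  have "pairAB N lam mu k a b phi_witness (psi_witness mu) =
      (if a = 2 \<and> b \<noteq> 2 then \<Sum>j\<in>{1..N} \<inter> {1, 2}. lam j ^ k * phi_witness 2 j else 0)"
    using assms(2)
    by (auto simp: pairAB_def psi_witness_def phi_witness_def split: if_splits
        intro!: sum.mono_neutral_cong_right)
  moreover have "{1..N} \<inter> {1, 2} = (if N \<ge> 2 then {1, 2} else {1})"
    using assms(1) by auto
  ultimately show ?thesis by (simp add: phi_witness_def)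
qed

lemma dphi_pairAB_witness:
  assumes "mu j \<noteq> 0"
  shows "dphi (pairAB N lam mu k a b) i j phi (psi_witness mu) =
    (if a = i \<and> j \<in> {1..N} \<and> b \<noteq> 2 then lam j ^ k else 0)"
  using assms by (auto simp: dphi_pairAB psi_witness_def)

lemma DN_entry:
  "r < 3*N \<Longrightarrow> c < 3*N \<Longrightarrow> DN N lam mu phi psi $$ (r, c) =
    dphi (if r < N then Fbar (r+1) else Fm N lam mu (r-N+1)) (c div N + 1) (c mod N + 1) phi psi"
  by (simp add: DN_def)

lemma det_neq_0_if_trivial_kernel:
  fixes A :: "'a::field mat"
  assumes "A \<in> carrier_mat n n"
    and "\<And>x c. (\<And>r. r < n \<Longrightarrow> (\<Sum>c<n. A $$ (r, c) * x c) = 0) \<Longrightarrow> c < n \<Longrightarrow> x c = 0"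
  shows "det A \<noteq> 0"
proof
  assume "det A = 0"
  then obtain v where v: "v \<in> carrier_vec n" "v \<noteq> 0\<^sub>v n" "A *\<^sub>v v = 0\<^sub>v n"
    using det_0_iff_vec_prod_zero_field[OF assms(1)] by blast
  have "(\<Sum>c<n. A $$ (r, c) * vec_index v c) = 0" if "r < n" for r
  proof -
    have "(\<Sum>c<n. A $$ (r, c) * vec_index v c) = vec_index (A *\<^sub>v v) r"
      using assms(1) v(1) that
      by (auto simp: scalar_prod_def lessThan_atLeast0 intro!: sum.cong)
    with v(3) that show ?thesis by simp
  qed
  then have "v = 0\<^sub>v n"
    using assms(2)[of "vec_index v"] v(1) by (intro eq_vecI) auto
  with v(2) show False ..
qed

lemma det_DN1_witness:
  assumes "mu 1 \<noteq> 0"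
  shows "det (DN 1 lam mu phi_witness (psi_witness mu)) \<noteq> 0"
proof (rule det_neq_0_if_trivial_kernel[where n = 3])
  let ?D = "DN 1 lam mu phi_witness (psi_witness mu)"
  show "?D \<in> carrier_mat 3 3" by (simp add: DN_def)
  fix x :: "nat \<Rightarrow> real" and c :: nat
  assume ker: "\<And>r. r < 3 \<Longrightarrow> (\<Sum>c<3. ?D $$ (r, c) * x c) = 0" and "c < 3"
  have mu_nonzero: "\<forall>j\<in>{1..1}. mu j \<noteq> 0" using assms by simp
  note entries = DN_entry dphi_Fbar dphi_Fm Fm_eq_sum Let_def pairAB_witness
    dphi_pairAB_witness psi_witness_def lessThan_nat_numeral atLeastLessThan_nat_numeral
  have "x 0 + x 2 = 0" using ker[of 0] assms by (simp add: entries field_simps)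
  moreover have "x 2 = x 0" using ker[of 1] mu_nonzero assms by (simp add: entries)
  moreover have "lam 1 * (x 2 - x 0) + 2 * x 1 = 0"
    using ker[of 2] mu_nonzero assms by (simp add: entries algebra_simps)
  ultimately have "x 0 = 0" "x 1 = 0" "x 2 = 0" by simp_all
  moreover have "c = 0 \<or> c = 1 \<or> c = 2" using \<open>c < 3\<close> by arith
  ultimately show "x c = 0" by auto
qed

lemma det_DN2_witness:
  assumes "lam 1 \<noteq> lam 2" and "mu 1 \<noteq> 0" and "mu 2 \<noteq> 0"
  shows "det (DN 2 lam mu phi_witness (psi_witness mu)) \<noteq> 0"
proof (rule det_neq_0_if_trivial_kernel[where n = 6])
  let ?D = "DN 2 lam mu phi_witness (psi_witness mu)"
  show "?D \<in> carrier_mat 6 6" by (simp add: DN_def)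
  fix x :: "nat \<Rightarrow> real" and c :: nat
  assume ker: "\<And>r. r < 6 \<Longrightarrow> (\<Sum>c<6. ?D $$ (r, c) * x c) = 0" and "c < 6"
  have "{1..2::nat} = {1, 2}" by auto
  with assms have mu_nonzero: "\<forall>j\<in>{1..2}. mu j \<noteq> 0" by simp
  \<comment> \<open>the index arithmetic \<open>c mod 2 + 1\<close> produces \<open>Suc (Suc 0)\<close> instead of the numeral\<close>
  have lam2: "lam (Suc (Suc 0)) = lam 2" by (simp add: numeral_2_eq_2)
  note entries = DN_entry dphi_Fbar dphi_Fm Fm_eq_sum Let_def pairAB_witness
    dphi_pairAB_witness psi_witness_def lessThan_nat_numeral atLeastLessThan_nat_numeral lam2
  have x4: "x 4 = - x 0" using ker[of 0] mu_nonzero assms by (simp add: entries field_simps)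
  have x5: "x 5 = - x 1" using ker[of 1] mu_nonzero assms by (simp add: entries field_simps)
  have "x 4 + x 5 = x 0 + x 1" using ker[of 2] mu_nonzero assms by (simp add: entries)
  then have x1: "x 1 = - x 0" using x4 x5 by simp
  have "lam 1 * (x 4 - x 0) + lam 2 * (x 5 - x 1) = 0"
    using ker[of 3] mu_nonzero assms by (simp add: entries algebra_simps)
  then have "(lam 1 - lam 2) * x 0 = 0" using x4 x5 x1 by (simp add: algebra_simps)
  then have x0: "x 0 = 0" using assms(1) by simp
  have "lam 1 ^ 2 * (x 4 - x 0) + lam 2 ^ 2 * (x 5 - x 1) + 2 * (lam 1 - lam 2) * (x 2 + x 3) = 0"
    using ker[of 4] mu_nonzero assms by (simp add: entries algebra_simps power2_eq_square)
  then have x3: "x 3 = - x 2" using x4 x5 x1 x0 assms(1) by simp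
  have "lam 1 ^ 3 * (x 4 - x 0) + lam 2 ^ 3 * (x 5 - x 1)
      + 2 * (lam 1 ^ 2 - lam 2 ^ 2 + (lam 1 - lam 2) * lam 1) * x 2
      + 2 * (lam 1 ^ 2 - lam 2 ^ 2 + (lam 1 - lam 2) * lam 2) * x 3 = 0"
    using ker[of 5] mu_nonzero assms
    by (simp add: entries algebra_simps power2_eq_square power3_eq_cube)
  then have "(lam 1 - lam 2) ^ 2 * x 2 = 0"
    using x4 x5 x1 x0 x3 by (simp add: algebra_simps power2_eq_square)
  then have x2: "x 2 = 0" using assms(1) by simp
  have "c = 0 \<or> c = 1 \<or> c = 2 \<or> c = 3 \<or> c = 4 \<or> c = 5" using \<open>c < 6\<close> by arith
  then show "x c = 0" using x0 x1 x2 x3 x4 x5 by auto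
qed

theorem theorem3p3:
  fixes N :: nat and lam mu :: "nat \<Rightarrow> real"
  assumes "N \<in> {1, 2}"
    and "inj_on lam {1..N}"
    and "\<forall>j\<in>{1..N}. mu j \<noteq> 0"
  shows "\<exists>phi psi. det (DN N lam mu phi psi) \<noteq> 0"
proof -
  consider "N = 1" | "N = 2" using assms(1) by blast
  then have "det (DN N lam mu phi_witness (psi_witness mu)) \<noteq> 0"
  proof cases
    case 1
    with assms(3) det_DN1_witness[of mu lam] show ?thesis by simp
  next
    case 2
    with inj_on_eq_iff[OF assms(2), of 1 2] have "lam 1 \<noteq> lam 2" by simp
    with 2 assms(3) det_DN2_witness[of lam mu] show ?thesis by simp
  qed
  then show ?thesis by blast
qed

end
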